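(* Let $(a_k)_{k\geqslant1}$ be a sequence of complex numbers such that \[ A(n)=\sum_{k\leqslant n}a_k\left[\frac{n}{k}\right]=Cn+o(n)\quad\text{as } n\to\infty \] for some constant $C\in\mathbb{C}$. Then \[ S(n)=\sum_{k\leqslant n}a_k\left[\frac{n}{k}\right]\log k=o(n\log n)\quad\text{as } n\to\infty. \]
   Context: $[x]$ denotes the integer part of a real number $x$. *)

theory Defs
  imports "HOL-Analysis.Analysis" "HOL-Library.Landau_Symbols"
begin

end

theory Submission
  imports Defs "HOL-Number_Theory.Prime_Powers"
begin

text \<open>
  Put \<open>c m = (\<Sum>k | k dvd m. a k)\<close>, so that \<open>A(n) = \<Sum>m\<le>n. c m\<close>. Splitting
  \<open>ln k = ln (k j) - ln j\<close> in \<open>S(n) = \<Sum>k \<Sum>j\<le>n/k. a k ln k\<close> gives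
  \<open>S(n) = \<Sum>m\<le>n. c m ln m - \<Sum>k a k ln [n/k]!\<close>. Abel summation turns the first sum into
  \<open>ln n A(n) - \<Sum>m<n. (ln (m+1) - ln m) A(m)\<close>, and \<open>ln N! = \<Sum>d \<Lambda>(d) [N/d]\<close> turns the
  second into \<open>\<Sum>d \<Lambda>(d) A([n/d])\<close>. Replacing \<open>a 1\<close> by \<open>a 1 - C\<close> we may assume \<open>C = 0\<close>,
  so \<open>|A(m)| \<le> \<epsilon> m + K\<close>; then the Abel part is \<open>O(\<epsilon> n ln n + K n)\<close> and the
  \<open>\<Lambda>\<close>-part is at most \<open>\<epsilon> ln n! + K \<psi>(n)\<close>, which is small by Chebyshev's bound
  \<open>\<psi>(n) \<le> 4 n\<close>. The latter comes from \<open>\<psi>(n) - \<psi>(n/2) \<le> ln n! - 2 ln [n/2]!\<close>, a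
  logarithmic central binomial coefficient.
\<close>

lemma sum_div_eq_sum_dvd:
  fixes h :: "nat \<Rightarrow> nat \<Rightarrow> 'a::comm_monoid_add"
  shows "(\<Sum>k=1..n. \<Sum>j=1..n div k. h k j) = (\<Sum>m=1..n. \<Sum>k | k dvd m. h k (m div k))"
proof -
  have "(\<Sum>k=1..n. \<Sum>j=1..n div k. h k j) = (\<Sum>(k, j)\<in>(SIGMA k:{1..n}. {1..n div k}). h k j)"
    by (rule sum.Sigma) auto
  also have "\<dots> = (\<Sum>(m, k)\<in>(SIGMA m:{1..n}. {k. k dvd m}). h k (m div k))"
    by (rule sum.reindex_bij_witness[of _ "\<lambda>(m, k). (k, m div k)" "\<lambda>(k, j). (k * j, k)"])
      (auto simp: less_eq_div_iff_mult_less_eq mult.commute Suc_le_eq div_greater_zero_iff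
        intro: div_le_mono, (meson dvd_imp_le dvd_pos_nat le_trans)+)
  also have "\<dots> = (\<Sum>m=1..n. \<Sum>k | k dvd m. h k (m div k))"
    by (rule sum.Sigma[symmetric]) auto
  finally show ?thesis .
qed

lemma sum_div_swap:
  fixes g :: "nat \<Rightarrow> nat \<Rightarrow> 'a::comm_monoid_add"
  shows "(\<Sum>k=1..n. \<Sum>d=1..n div k. g k d) = (\<Sum>d=1..n. \<Sum>k=1..n div d. g k d)"
proof -
  have div_eq: "{j \<in> {1..n}. i * j \<le> n} = {1..n div i}" if "i \<ge> 1" for i
    using that by (auto simp: less_eq_div_iff_mult_less_eq[symmetric] mult.commute[of i]
        intro: order_trans[OF _ div_le_dividend])
  have "(\<Sum>k=1..n. \<Sum>d=1..n div k. g k d) = (\<Sum>k=1..n. \<Sum>d\<in>{d\<in>{1..n}. k * d \<le> n}. g k d)"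
    by (intro sum.cong refl, subst div_eq) auto
  also have "\<dots> = (\<Sum>d=1..n. \<Sum>k\<in>{k\<in>{1..n}. k * d \<le> n}. g k d)"
    by (rule sum.swap_restrict) auto
  also have "\<dots> = (\<Sum>d=1..n. \<Sum>k=1..n div d. g k d)"
    by (intro sum.cong refl, subst mult.commute, subst div_eq) auto
  finally show ?thesis .
qed

lemma ln_fact_eq_sum_ln: "ln (fact n) = (\<Sum>j=1..n. ln (real j))"
  unfolding fact_prod of_nat_prod by (subst ln_prod) auto

lemma ln_fact_eq_sum_mangoldt: "ln (fact n) = (\<Sum>d=1..n. mangoldt d * real (n div d))"
proof -
  have "ln (fact n) = (\<Sum>m=1..n. ln (real m))"
    by (rule ln_fact_eq_sum_ln)
  also have "\<dots> = (\<Sum>m=1..n. \<Sum>d | d dvd m. mangoldt d)"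
    by (simp add: mangoldt_sum)
  also have "\<dots> = (\<Sum>d=1..n. \<Sum>j=1..n div d. mangoldt d)"
    by (rule sum_div_eq_sum_dvd[symmetric])
  finally show ?thesis by (simp add: mult.commute)
qed

lemma ln_fact_le: "ln (fact n) \<le> real n * ln (real n)"
proof (cases "n = 0")
  case False
  have "ln (fact n) \<le> ln (real (n ^ n))"
    by (subst ln_le_cancel_iff) (use False fact_le_power[of n] in auto)
  then show ?thesis by (simp add: ln_realpow)
qed simp

lemma fact_le_fact_half_squared: "(fact n :: real) \<le> (real n + 1) * 2 ^ n * (fact (n div 2))\<^sup>2"
proof -
  define m where "m = n div 2"
  have "m \<le> n" by (simp add: m_def)
  have fact_upper_half: "fact (n - m) \<le> (n + 1) * (fact m :: nat)"
  proof (cases "n - m = m")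
    case False
    then have "n - m = Suc m" unfolding m_def by presburger
    then show ?thesis using \<open>m \<le> n\<close> by simp
  qed simp
  have "(fact n :: nat) = fact m * fact (n - m) * (n choose m)"
    by (rule binomial_fact_lemma[OF \<open>m \<le> n\<close>, symmetric])
  also have "\<dots> \<le> fact m * ((n + 1) * fact m) * 2 ^ n"
    by (intro mult_le_mono fact_upper_half binomial_le_pow2 order.refl)
  also have "\<dots> = (n + 1) * 2 ^ n * (fact m)\<^sup>2"
    by (simp add: power2_eq_square algebra_simps)
  finally have "real (fact n) \<le> real ((n + 1) * 2 ^ n * (fact m)\<^sup>2)"
    by (rule of_nat_mono)
  then show ?thesis
    unfolding m_def by (simp only: of_nat_mult of_nat_power of_nat_fact of_nat_add of_nat_1 of_nat_numeral)
qed

lemma ln_fact_sub_ln_fact_half_le: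
  "ln (fact n) - 2 * ln (fact (n div 2)) \<le> real n * ln 2 + ln (real n + 1)"
proof -
  have "ln (fact n) \<le> ln ((real n + 1) * 2 ^ n * (fact (n div 2))\<^sup>2)"
    using fact_le_fact_half_squared[of n] by (subst ln_le_cancel_iff) auto
  also have "\<dots> = ln (real n + 1) + real n * ln 2 + 2 * ln (fact (n div 2))"
    by (simp add: ln_mult ln_realpow)
  finally show ?thesis by simp
qed

definition chebyshev_psi :: "nat \<Rightarrow> real" where
  "chebyshev_psi n = (\<Sum>d=1..n. mangoldt d)"

lemma div_ge_twice_half_div:
  fixes n d :: nat
  assumes "1 \<le> d" "d \<le> n"
  shows "of_bool (n div 2 < d) + 2 * (n div 2 div d) \<le> n div d"
proof (cases "d \<le> n div 2")
  case True
  have "n div 2 div d * d \<le> n div 2"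
    by (rule div_times_less_eq_dividend)
  then have "2 * (n div 2 div d) * d \<le> n"
    by linarith
  then show ?thesis
    using True assms by (simp add: less_eq_div_iff_mult_less_eq)
next
  case False
  then show ?thesis using assms by (simp add: div_greater_zero_iff Suc_le_eq)
qed

lemma chebyshev_psi_sub_half_le:
  "chebyshev_psi n - chebyshev_psi (n div 2) \<le> ln (fact n) - 2 * ln (fact (n div 2))"
proof -
  define m where "m = n div 2"
  have "m \<le> n" by (simp add: m_def)
  have psi_m: "chebyshev_psi m = (\<Sum>d=1..n. mangoldt d * of_bool (d \<le> m))"
    unfolding chebyshev_psi_def by (rule sum.mono_neutral_cong_left) (use \<open>m \<le> n\<close> in auto)
  have fact_m: "ln (fact m) = (\<Sum>d=1..n. mangoldt d * real (m div d))"
    unfolding ln_fact_eq_sum_mangoldt by (rule sum.mono_neutral_left) (use \<open>m \<le> n\<close> in auto)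
  have "chebyshev_psi n - chebyshev_psi m = (\<Sum>d=1..n. mangoldt d - mangoldt d * of_bool (d \<le> m))"
    unfolding psi_m by (simp add: chebyshev_psi_def sum_subtractf)
  also have "\<dots> = (\<Sum>d=1..n. mangoldt d * of_bool (m < d))"
    by (intro sum.cong) auto
  also have "\<dots> \<le> (\<Sum>d=1..n. mangoldt d * (real (n div d) - 2 * real (m div d)))"
  proof (intro sum_mono mult_left_mono mangoldt_nonneg)
    fix d assume "d \<in> {1..n}"
    then have "of_bool (m < d) + 2 * (m div d) \<le> n div d"
      unfolding m_def by (intro div_ge_twice_half_div) auto
    then have "real (of_bool (m < d) + 2 * (m div d)) \<le> real (n div d)"
      by (rule of_nat_mono)
    then show "of_bool (m < d) \<le> real (n div d) - 2 * real (m div d)"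
      by simp
  qed
  also have "\<dots> = ln (fact n) - 2 * ln (fact m)"
    by (simp only: fact_m) (simp add: ln_fact_eq_sum_mangoldt sum_subtractf sum_distrib_left algebra_simps)
  finally show ?thesis unfolding m_def .
qed

lemma chebyshev_psi_le: "chebyshev_psi n \<le> 4 * real n"
proof (induction n rule: less_induct)
  case (less n)
  show ?case
  proof (cases "n = 0")
    case False
    then have "chebyshev_psi (n div 2) \<le> 4 * real (n div 2)"
      by (intro less) simp
    moreover have "4 * real (n div 2) \<le> 2 * real n" by linarith
    moreover have "real n * ln 2 \<le> real n"
      using ln_2_less_1 by (intro mult_left_le) auto
    moreover have "ln (real n + 1) \<le> real n"
      using ln_le_minus_one[of "real n + 1"] by simp
    ultimately show ?thesis
      using chebyshev_psi_sub_half_le[of n] ln_fact_sub_ln_fact_half_le[of n] by linarith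
  qed (simp add: chebyshev_psi_def)
qed

lemma summation_by_parts:
  fixes w c :: "nat \<Rightarrow> 'a::comm_ring"
  shows "(\<Sum>m=1..n. w m * c m) = w n * (\<Sum>m=1..n. c m) - (\<Sum>m<n. (w (Suc m) - w m) * (\<Sum>i=1..m. c i))"
  by (induction n) (simp_all add: algebra_simps)

definition floor_sum :: "(nat \<Rightarrow> 'a::real_normed_field) \<Rightarrow> nat \<Rightarrow> 'a" where
  "floor_sum a n = (\<Sum>k=1..n. a k * of_nat (n div k))"

definition floor_sum_ln :: "(nat \<Rightarrow> 'a::real_normed_field) \<Rightarrow> nat \<Rightarrow> 'a" where
  "floor_sum_ln a n = (\<Sum>k=1..n. a k * of_nat (n div k) * of_real (ln (real k)))"

lemma floor_sum_eq_sum_dvd: "floor_sum a n = (\<Sum>m=1..n. \<Sum>k | k dvd m. a k)"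
proof -
  have "floor_sum a n = (\<Sum>k=1..n. \<Sum>j=1..n div k. a k)"
    unfolding floor_sum_def by (simp add: mult.commute)
  also have "\<dots> = (\<Sum>m=1..n. \<Sum>k | k dvd m. a k)"
    by (rule sum_div_eq_sum_dvd)
  finally show ?thesis .
qed

lemma sum_ln_fact_floor_eq:
  "(\<Sum>k=1..n. a k * of_real (ln (fact (n div k)))) = (\<Sum>d=1..n. mangoldt d * floor_sum a (n div d))"
proof -
  have "(\<Sum>k=1..n. a k * of_real (ln (fact (n div k))))
      = (\<Sum>k=1..n. \<Sum>d=1..n div k. mangoldt d * (a k * of_nat (n div d div k)))"
    by (simp add: ln_fact_eq_sum_mangoldt sum_distrib_left div_mult2_eq[symmetric] mult_ac)
  also have "\<dots> = (\<Sum>d=1..n. \<Sum>k=1..n div d. mangoldt d * (a k * of_nat (n div d div k)))"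
    by (rule sum_div_swap)
  finally show ?thesis
    by (simp add: floor_sum_def sum_distrib_left)
qed

lemma floor_sum_ln_eq:
  "floor_sum_ln a n = of_real (ln (real n)) * floor_sum a n
     - (\<Sum>m<n. of_real (ln (real (Suc m)) - ln (real m)) * floor_sum a m)
     - (\<Sum>d=1..n. mangoldt d * floor_sum a (n div d))"
proof -
  have "floor_sum_ln a n = (\<Sum>k=1..n. \<Sum>j=1..n div k. a k * of_real (ln (real (k * j))))
      - (\<Sum>k=1..n. a k * of_real (ln (fact (n div k))))"
  proof -
    have "floor_sum_ln a n
        = (\<Sum>k=1..n. \<Sum>j=1..n div k. a k * of_real (ln (real (k * j))) - a k * of_real (ln (real j)))"
      unfolding floor_sum_ln_def by (intro sum.cong refl) (simp add: ln_mult algebra_simps)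
    then show ?thesis
      by (simp add: sum_subtractf ln_fact_eq_sum_ln sum_distrib_left)
  qed
  also have "(\<Sum>k=1..n. \<Sum>j=1..n div k. a k * of_real (ln (real (k * j))))
      = (\<Sum>m=1..n. \<Sum>k | k dvd m. a k * of_real (ln (real (k * (m div k)))))"
    by (rule sum_div_eq_sum_dvd)
  also have "\<dots> = (\<Sum>m=1..n. of_real (ln (real m)) * (\<Sum>k | k dvd m. a k))"
    unfolding sum_distrib_left by (intro sum.cong refl) (simp add: dvd_mult_div_cancel mult.commute)
  also have "\<dots> = of_real (ln (real n)) * floor_sum a n
      - (\<Sum>m<n. of_real (ln (real (Suc m)) - ln (real m)) * floor_sum a m)"
    unfolding floor_sum_eq_sum_dvd of_real_diff by (rule summation_by_parts)
  finally show ?thesis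
    unfolding sum_ln_fact_floor_eq .
qed

lemma ln_Suc_sub_ln_mult_le: "(ln (real (Suc m)) - ln (real m)) * real m \<le> 1"
proof (cases "m = 0")
  case False
  then have "1 + 1 / real m = real (Suc m) / real m"
    by (simp add: field_simps)
  then have "ln (real (Suc m)) - ln (real m) = ln (1 + 1 / real m)"
    using False by (simp add: ln_div)
  also have "\<dots> \<le> 1 / real m"
    by (rule ln_add_one_self_le_self) simp
  finally show ?thesis
    using False by (simp add: field_simps)
qed simp

lemma ln_of_nat_nonneg: "0 \<le> ln (real n)"
  by (cases "n = 0") auto

lemma norm_sum_ln_increments_le:
  fixes A :: "nat \<Rightarrow> 'a::real_normed_field"
  assumes "0 \<le> eps" and A: "\<And>m. norm (A m) \<le> eps * real m + K"
  shows "norm (\<Sum>m<n. of_real (ln (real (Suc m)) - ln (real m)) * A m) \<le> eps * real n + K * ln (real n)"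
proof -
  define \<delta> where "\<delta> m = ln (real (Suc m)) - ln (real m)" for m
  have \<delta>_nonneg: "0 \<le> \<delta> m" for m
    unfolding \<delta>_def by (cases "m = 0") auto
  have "norm (\<Sum>m<n. of_real (\<delta> m) * A m) \<le> (\<Sum>m<n. \<delta> m * (eps * real m + K))"
    by (rule order_trans[OF norm_sum sum_mono]) (simp add: norm_mult \<delta>_nonneg A mult_left_mono)
  also have "\<dots> = eps * (\<Sum>m<n. \<delta> m * real m) + K * (\<Sum>m<n. \<delta> m)"
    by (simp add: sum.distrib sum_distrib_left algebra_simps)
  also have "(\<Sum>m<n. \<delta> m) = ln (real n)"
    unfolding \<delta>_def by (subst sum_lessThan_telescope) simp
  also have "eps * (\<Sum>m<n. \<delta> m * real m) \<le> eps * real n"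
    using sum_bounded_above[of "{..<n}" "\<lambda>m. \<delta> m * real m" 1] ln_Suc_sub_ln_mult_le \<open>0 \<le> eps\<close>
    by (simp add: \<delta>_def mult_left_mono)
  finally show ?thesis
    unfolding \<delta>_def by simp
qed

lemma norm_sum_mangoldt_le:
  fixes A :: "nat \<Rightarrow> 'a::real_normed_field"
  assumes "0 \<le> eps" "0 \<le> K" and A: "\<And>m. norm (A m) \<le> eps * real m + K"
  shows "norm (\<Sum>d=1..n. mangoldt d * A (n div d)) \<le> eps * (real n * ln (real n)) + 4 * K * real n"
proof -
  have "norm (\<Sum>d=1..n. mangoldt d * A (n div d)) \<le> (\<Sum>d=1..n. mangoldt d * (eps * real (n div d) + K))"
    by (rule order_trans[OF norm_sum sum_mono]) (simp add: norm_mult mangoldt_nonneg A mult_left_mono)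
  also have "\<dots> = eps * ln (fact n) + K * chebyshev_psi n"
    by (simp add: ln_fact_eq_sum_mangoldt chebyshev_psi_def sum.distrib sum_distrib_left algebra_simps)
  also have "\<dots> \<le> eps * (real n * ln (real n)) + K * (4 * real n)"
    by (intro add_mono mult_left_mono ln_fact_le chebyshev_psi_le assms)
  finally show ?thesis by simp
qed

lemma norm_floor_sum_ln_le:
  assumes "0 \<le> eps" and A: "\<And>m. norm (floor_sum a m) \<le> eps * real m + K"
  shows "norm (floor_sum_ln a n) \<le> 2 * eps * (real n * ln (real n)) + (eps + 6 * K) * real n"
proof -
  have "0 \<le> K"
    using A[of 0] by (simp add: floor_sum_def)
  have "ln (real n) \<le> real n"
    by (cases "n = 0") (simp_all add: ln_bound)
  have "norm (floor_sum_ln a n) \<le> norm (of_real (ln (real n)) * floor_sum a n)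
      + norm (\<Sum>m<n. of_real (ln (real (Suc m)) - ln (real m)) * floor_sum a m)
      + norm (\<Sum>d=1..n. mangoldt d * floor_sum a (n div d))"
    unfolding floor_sum_ln_eq by (intro order_trans[OF norm_triangle_ineq4] add_mono norm_triangle_ineq4 order.refl)
  also have "\<dots> \<le> ln (real n) * (eps * real n + K) + (eps * real n + K * ln (real n))
      + (eps * (real n * ln (real n)) + 4 * K * real n)"
    by (intro add_mono norm_sum_ln_increments_le norm_sum_mangoldt_le assms \<open>0 \<le> K\<close>)
      (simp add: norm_mult A mult_left_mono ln_of_nat_nonneg)
  also have "\<dots> \<le> 2 * eps * (real n * ln (real n)) + (eps + 6 * K) * real n"
    using mult_left_mono[OF \<open>ln (real n) \<le> real n\<close> \<open>0 \<le> K\<close>] by (simp add: algebra_simps)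
  finally show ?thesis .
qed

lemma smallo_imp_affine_bound:
  fixes f :: "nat \<Rightarrow> 'a::real_normed_field"
  assumes "f \<in> o(\<lambda>n. of_nat n)" "0 < eps"
  obtains K where "\<And>n. norm (f n) \<le> eps * real n + K"
proof -
  obtain N where N: "\<And>n. N \<le> n \<Longrightarrow> norm (f n) \<le> eps * real n"
    using landau_o.smallD[OF assms] by (auto simp: eventually_at_top_linorder)
  have "norm (f n) \<le> eps * real n + (\<Sum>m<N. norm (f m))" for n
  proof (cases "N \<le> n")
    case False
    then have "norm (f n) \<le> (\<Sum>m<N. norm (f m))"
      by (intro member_le_sum) auto
    then show ?thesis
      using \<open>0 < eps\<close> by (simp add: add_increasing)
  qed (use N in \<open>simp add: add_increasing2 sum_nonneg\<close>)
  then show thesis by (rule that)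
qed

lemma smallo_n_ln_n_of_bounds:
  fixes f :: "nat \<Rightarrow> 'a::real_normed_field"
  assumes "\<And>eps. 0 < eps \<Longrightarrow> \<exists>K. \<forall>n. norm (f n) \<le> eps * (real n * ln (real n)) + K * real n"
  shows "f \<in> o(\<lambda>n. of_real (real n * ln (real n)))"
proof (rule landau_o.smallI)
  fix c :: real assume "0 < c"
  then obtain K where K: "\<And>n. norm (f n) \<le> c / 2 * (real n * ln (real n)) + K * real n"
    using assms[of "c / 2"] by auto
  have "filterlim (\<lambda>n. ln (real n)) at_top sequentially"
    by (rule filterlim_compose[OF ln_at_top filterlim_real_sequentially])
  then have "eventually (\<lambda>n. 2 * K / c \<le> ln (real n)) sequentially"
    by (simp add: filterlim_at_top)
  then show "eventually (\<lambda>n. norm (f n) \<le> c * norm (of_real (real n * ln (real n)) :: 'a)) sequentially"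
  proof eventually_elim
    case (elim n)
    then have "K \<le> c / 2 * ln (real n)"
      using \<open>0 < c\<close> by (simp add: field_simps)
    then have "K * real n \<le> c / 2 * (real n * ln (real n))"
      using mult_right_mono[of K "c / 2 * ln (real n)" "real n"] by (simp add: mult_ac)
    moreover have "norm (of_real (real n * ln (real n)) :: 'a) = real n * ln (real n)"
      using ln_of_nat_nonneg[of n] by (simp only: norm_of_real) simp
    ultimately show ?case
      using K[of n] by simp
  qed
qed

theorem floor_sum_ln_smallo:
  fixes a :: "nat \<Rightarrow> 'a::real_normed_field"
  assumes "floor_sum a \<in> o(\<lambda>n. of_nat n)"
  shows "floor_sum_ln a \<in> o(\<lambda>n. of_real (real n * ln (real n)))"
proof (rule smallo_n_ln_n_of_bounds)
  fix eps :: real assume "0 < eps"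
  then obtain K where "\<And>m. norm (floor_sum a m) \<le> eps / 2 * real m + K"
    using smallo_imp_affine_bound[OF assms, of "eps / 2"] by auto
  then have "norm (floor_sum_ln a n) \<le> eps * (real n * ln (real n)) + (eps / 2 + 6 * K) * real n" for n
    using norm_floor_sum_ln_le[of "eps / 2" a K n] \<open>0 < eps\<close> by simp
  then show "\<exists>K. \<forall>n. norm (floor_sum_ln a n) \<le> eps * (real n * ln (real n)) + K * real n"
    by blast
qed

theorem lemma4:
  fixes a :: "nat \<Rightarrow> complex" and C :: complex
  assumes "(\<lambda>n::nat. (\<Sum>k=1..n. a k * of_nat (n div k)) - C * of_nat n)
             \<in> o(\<lambda>n. of_nat n)"
  shows "(\<lambda>n::nat. \<Sum>k=1..n. a k * of_nat (n div k) * of_real (ln (real k)))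
           \<in> o(\<lambda>n. of_real (real n * ln (real n)))"
proof -
  define b where "b k = a k - (if k = 1 then C else 0)" for k
  have "floor_sum b n = (\<Sum>k=1..n. a k * of_nat (n div k))
      - (\<Sum>k=1..n. if k = 1 then C * of_nat (n div k) else 0)" for n
    unfolding floor_sum_def b_def sum_subtractf[symmetric] by (intro sum.cong) (auto simp: algebra_simps)
  then have floor_sum_b: "floor_sum b = (\<lambda>n. (\<Sum>k=1..n. a k * of_nat (n div k)) - C * of_nat n)"
    by (intro ext) (simp add: sum.delta)
  have floor_sum_ln_b: "floor_sum_ln b = (\<lambda>n. \<Sum>k=1..n. a k * of_nat (n div k) * of_real (ln (real k)))"
    unfolding floor_sum_ln_def b_def by (intro ext sum.cong) auto
  from assms have "floor_sum b \<in> o(\<lambda>n. of_nat n)"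
    unfolding floor_sum_b .
  then show ?thesis
    unfolding floor_sum_ln_b[symmetric] by (rule floor_sum_ln_smallo)
qed

end
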